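(* Let $G=(U,E)$ be a tree and $\mathcal S\subset 2^U$ a category system such that $(G,\mathcal S)$ is internally connected and shattered. Then the greedy category-based routing strategy ROUTING routes messages correctly between every pair of vertices.
   Context: $N(s)$ denotes the set of neighbors of $s$ in $G$. $(G,\mathcal S)$ is internally connected if for every $C\in\mathcal S$ the subgraph of $G$ induced by $C$ is connected. $(G,\mathcal S)$ is shattered if for all $s,t\in U$ with $s\neq t$ there exist $u\in N(s)$ and $C\in\mathcal S$ with $u\in C$, $t\in C$ and $s\notin C$ (possibly $u=t$). For $u\in U$ let $\mathrm{cat}(u)=\{C\in\mathcal S: u\in C\}$, and $d(s,t)=|\mathrm{cat}(t)\setminus\mathrm{cat}(s)|$. ROUTING: a node $u$ holding a message for destination $w\neq u$ forwards it to a neighbor $v\in N(u)$ with $d(v,w)<d(u,w)$. ROUTING routes correctly between all pairs if for every ordered pair of distinct vertices $u,w$ there is a neighbor $v\in N(u)$ with $d(v,w)<d(u,w)$. *)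

theory Defs
  imports Main
begin

definition simple_graph :: "'a set \<Rightarrow> ('a \<Rightarrow> 'a \<Rightarrow> bool) \<Rightarrow> bool" where
  "simple_graph U E \<longleftrightarrow> (\<forall>u v. E u v \<longrightarrow> u \<in> U \<and> v \<in> U \<and> E v u \<and> u \<noteq> v)"

definition nbrs :: "('a \<Rightarrow> 'a \<Rightarrow> bool) \<Rightarrow> 'a \<Rightarrow> 'a set" where
  "nbrs E s = {u. E s u}"

fun walk :: "('a \<Rightarrow> 'a \<Rightarrow> bool) \<Rightarrow> 'a list \<Rightarrow> bool" where
  "walk E [] = False"
| "walk E [x] = True"
| "walk E (x # y # xs) = (E x y \<and> walk E (y # xs))"

definition induced_connected :: "('a \<Rightarrow> 'a \<Rightarrow> bool) \<Rightarrow> 'a set \<Rightarrow> bool" where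
  "induced_connected E C \<longleftrightarrow>
     (\<forall>u\<in>C. \<forall>v\<in>C. \<exists>p. walk E p \<and> hd p = u \<and> last p = v \<and> set p \<subseteq> C)"

definition has_cycle :: "('a \<Rightarrow> 'a \<Rightarrow> bool) \<Rightarrow> bool" where
  "has_cycle E \<longleftrightarrow> (\<exists>p. length p \<ge> 3 \<and> distinct p \<and> walk E p \<and> E (last p) (hd p))"

definition is_tree :: "'a set \<Rightarrow> ('a \<Rightarrow> 'a \<Rightarrow> bool) \<Rightarrow> bool" where
  "is_tree U E \<longleftrightarrow> finite U \<and> U \<noteq> {} \<and> simple_graph U E \<and> induced_connected E U \<and> \<not> has_cycle E"

definition internally_connected :: "('a \<Rightarrow> 'a \<Rightarrow> bool) \<Rightarrow> 'a set set \<Rightarrow> bool" where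
  "internally_connected E S \<longleftrightarrow> (\<forall>C\<in>S. induced_connected E C)"

definition shattered :: "'a set \<Rightarrow> ('a \<Rightarrow> 'a \<Rightarrow> bool) \<Rightarrow> 'a set set \<Rightarrow> bool" where
  "shattered U E S \<longleftrightarrow> (\<forall>s\<in>U. \<forall>t\<in>U. s \<noteq> t \<longrightarrow>
      (\<exists>u\<in>nbrs E s. \<exists>C\<in>S. u \<in> C \<and> t \<in> C \<and> s \<notin> C))"

definition cat :: "'a set set \<Rightarrow> 'a \<Rightarrow> 'a set set" where
  "cat S u = {C\<in>S. u \<in> C}"

definition cdist :: "'a set set \<Rightarrow> 'a \<Rightarrow> 'a \<Rightarrow> nat" where
  "cdist S s t = card (cat S t - cat S s)"

definition routes_correctly :: "'a set \<Rightarrow> ('a \<Rightarrow> 'a \<Rightarrow> bool) \<Rightarrow> 'a set set \<Rightarrow> bool" where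
  "routes_correctly U E S \<longleftrightarrow> (\<forall>u\<in>U. \<forall>w\<in>U. u \<noteq> w \<longrightarrow>
      (\<exists>v\<in>nbrs E u. cdist S v w < cdist S u w))"

end

theory Submission
  imports Defs
begin

text \<open>In a tree, for distinct u and w there is exactly one neighbour v of u from which w can
  be reached without passing through u: two such neighbours would close a cycle through u.
  Shattering provides a neighbour v and a category containing v and w but not u; being
  connected, that category yields a walk from v to w avoiding u, so v is this unique neighbour.
  Every connected category containing both u and w contains a walk from u to w, whose first
  step after leaving u for the last time is again v. Hence every category of w that u lies in
  also contains v, and the shattering category is one more that v has and u has not, so moving
  to v strictly decreases the category distance to w.\<close>

lemma walk_not_Nil: "walk E p \<Longrightarrow> p \<noteq> []"
  by (cases p) auto

lemma walk_Cons_iff: "walk E (x # q) \<longleftrightarrow> q = [] \<or> E x (hd q) \<and> walk E q"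
  by (cases q) auto

lemma walk_append_tl:
  "walk E p \<Longrightarrow> walk E q \<Longrightarrow> last p = hd q \<Longrightarrow> walk E (p @ tl q)"
proof (induction p)
  case Nil
  then show ?case by simp
next
  case (Cons x p)
  show ?case
  proof (cases "p = []")
    case True
    then show ?thesis using Cons.prems walk_not_Nil[of E q] by (cases q) auto
  next
    case False
    then show ?thesis using Cons by (auto simp: walk_Cons_iff)
  qed
qed

lemma walk_join:
  assumes "walk E p" "walk E q" "last p = hd q"
  obtains r where "walk E r" "hd r = hd p" "last r = last q" "set r \<subseteq> set p \<union> set q"
proof
  have "p \<noteq> []" "q \<noteq> []" using assms walk_not_Nil by blast+
  then show "walk E (p @ tl q)" "hd (p @ tl q) = hd p" "set (p @ tl q) \<subseteq> set p \<union> set q"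
    using assms walk_append_tl by (auto dest: list.set_sel(2))
  show "last (p @ tl q) = last q"
    using \<open>q \<noteq> []\<close> assms(3) by (cases q) (auto simp: last_append)
qed

lemma walk_rev:
  assumes sym: "\<And>a b. E a b \<Longrightarrow> E b a" and "walk E p"
  shows "walk E (rev p)"
  using \<open>walk E p\<close>
proof (induction p)
  case Nil
  then show ?case by simp
next
  case (Cons x p)
  show ?case
  proof (cases "p = []")
    case True
    then show ?thesis by simp
  next
    case False
    then have "walk E (rev p)" "walk E [hd p, x]"
      using Cons sym by (auto simp: walk_Cons_iff)
    then have "walk E (rev p @ tl [hd p, x])"
      by (rule walk_append_tl) (simp add: last_rev False)
    then show ?thesis by simp
  qed
qed

lemma walk_appendD2: "walk E (a @ b) \<Longrightarrow> b \<noteq> [] \<Longrightarrow> walk E b"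
  by (induction a) (auto simp: walk_Cons_iff)

lemma walk_distinct_subwalk:
  assumes "walk E p"
  obtains q where "walk E q" "hd q = hd p" "last q = last p" "set q \<subseteq> set p" "distinct q"
  using assms
proof (induction p arbitrary: thesis)
  case Nil
  then show ?case by simp
next
  case (Cons x p)
  show ?case
  proof (cases "p = []")
    case True
    then show ?thesis using Cons.prems(1)[of "[x]"] by simp
  next
    case False
    then have wp: "walk E p" and step: "E x (hd p)" using Cons.prems(2) by (auto simp: walk_Cons_iff)
    obtain q where q: "walk E q" "hd q = hd p" "last q = last p" "set q \<subseteq> set p" "distinct q"
      using Cons.IH wp by blast
    show ?thesis
    proof (cases "x \<in> set q")
      case True
      then obtain a b where "q = a @ x # b" by (meson split_list)
      then show ?thesis
        using Cons.prems(1)[of "x # b"] q False walk_appendD2[of E a "x # b"] by auto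
    next
      case False
      then show ?thesis
        using Cons.prems(1)[of "x # q"] q step walk_not_Nil[OF q(1)] \<open>p \<noteq> []\<close>
        by (auto simp: walk_Cons_iff)
    qed
  qed
qed

lemma walk_after_last_visit:
  assumes "walk E p" "u \<in> set p" "last p \<noteq> u"
  obtains q where "walk E q" "E u (hd q)" "last q = last p" "u \<notin> set q" "set q \<subseteq> set p"
  using assms
proof (induction p arbitrary: thesis)
  case Nil
  then show ?case by simp
next
  case (Cons x p)
  have "p \<noteq> []" using Cons.prems by auto
  then have wp: "walk E p" and step: "E x (hd p)" using Cons.prems(2) by (auto simp: walk_Cons_iff)
  show ?case
  proof (cases "u \<in> set p")
    case True
    then show ?thesis
      using Cons.IH[OF _ wp] Cons.prems \<open>p \<noteq> []\<close>
      by (metis last_ConsR set_subset_Cons subset_trans)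
  next
    case False
    then show ?thesis using Cons.prems(1)[of p] Cons.prems(3) wp step \<open>p \<noteq> []\<close> by auto
  qed
qed

lemma acyclic_unique_first_step:
  assumes acyclic: "\<not> has_cycle E" and sym: "\<And>a b. E a b \<Longrightarrow> E b a"
    and "E u v" "E u v'"
    and p: "walk E p" "hd p = v" "last p = w" "u \<notin> set p"
    and p': "walk E p'" "hd p' = v'" "last p' = w" "u \<notin> set p'"
  shows "v = v'"
proof (rule ccontr)
  assume "v \<noteq> v'"
  have "p' \<noteq> []" using p'(1) walk_not_Nil by blast
  then have rev_p': "walk E (rev p')" "hd (rev p') = last p" "last (rev p') = v'"
    using walk_rev[OF sym p'(1)] p p' by (auto simp: hd_rev last_rev)
  obtain r where r: "walk E r" "hd r = hd p" "last r = last (rev p')"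
      "set r \<subseteq> set p \<union> set (rev p')"
    using walk_join[OF p(1) rev_p'(1) rev_p'(2)[symmetric]] by blast
  obtain d where d: "walk E d" "hd d = hd r" "last d = last r" "set d \<subseteq> set r" "distinct d"
    using walk_distinct_subwalk[OF r(1)] by blast
  have "hd d = v" "last d = v'" "u \<notin> set d"
    using d r p p' rev_p' by auto
  have "d \<noteq> []" using d(1) walk_not_Nil by blast
  have "length d \<ge> 2"
    using \<open>hd d = v\<close> \<open>last d = v'\<close> \<open>v \<noteq> v'\<close> \<open>d \<noteq> []\<close> by (cases d) (auto simp: Suc_le_eq)
  then have "has_cycle E"
    unfolding has_cycle_def
    using d \<open>d \<noteq> []\<close> \<open>hd d = v\<close> \<open>last d = v'\<close> \<open>u \<notin> set d\<close> assms(3,4) sym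
    by (intro exI[of _ "u # d"]) (auto simp: walk_Cons_iff)
  with acyclic show False ..
qed

lemma connected_contains_first_step:
  assumes acyclic: "\<not> has_cycle E" and sym: "\<And>a b. E a b \<Longrightarrow> E b a"
    and C: "induced_connected E C" "u \<in> C" "w \<in> C" "u \<noteq> w"
    and "E u v" and p: "walk E p" "hd p = v" "last p = w" "u \<notin> set p"
  shows "v \<in> C"
proof -
  obtain p\<^sub>C where pC: "walk E p\<^sub>C" "hd p\<^sub>C = u" "last p\<^sub>C = w" "set p\<^sub>C \<subseteq> C"
    using C unfolding induced_connected_def by blast
  have "u \<in> set p\<^sub>C" using pC(1,2) walk_not_Nil by (metis list.set_sel(1))
  then obtain q where q: "walk E q" "E u (hd q)" "last q = w" "u \<notin> set q" "set q \<subseteq> C"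
    using walk_after_last_visit[OF pC(1)] pC(3,4) \<open>u \<noteq> w\<close> by (metis subset_trans)
  have "v = hd q"
    using acyclic_unique_first_step[OF acyclic sym \<open>E u v\<close> q(2) p q(1) refl q(3,4)] .
  then show ?thesis using q(1,5) walk_not_Nil by (metis list.set_sel(1) subsetD)
qed

lemma cdist_less:
  assumes "finite S" "cat S u \<inter> cat S w \<subset> cat S v \<inter> cat S w"
  shows "cdist S v w < cdist S u w"
proof -
  have "cat S w - cat S v \<subset> cat S w - cat S u" using assms(2) by blast
  moreover have "finite (cat S w - cat S u)" using assms(1) unfolding cat_def by simp
  ultimately show ?thesis unfolding cdist_def by (rule psubset_card_mono[rotated])
qed

theorem lemma2:
  fixes U :: "'a set" and E :: "'a \<Rightarrow> 'a \<Rightarrow> bool" and S :: "'a set set"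
  assumes "is_tree U E"
    and "S \<subseteq> Pow U"
    and "internally_connected E S"
    and "shattered U E S"
  shows "routes_correctly U E S"
  unfolding routes_correctly_def
proof (intro ballI impI)
  fix u w assume "u \<in> U" "w \<in> U" "u \<noteq> w"
  have acyclic: "\<not> has_cycle E" and sym: "\<And>a b. E a b \<Longrightarrow> E b a" and "finite S"
    using assms(1,2) finite_subset unfolding is_tree_def simple_graph_def by blast+
  obtain v C\<^sub>0 where v: "v \<in> nbrs E u" and C\<^sub>0: "C\<^sub>0 \<in> S" "v \<in> C\<^sub>0" "w \<in> C\<^sub>0" "u \<notin> C\<^sub>0"
    using assms(4) \<open>u \<in> U\<close> \<open>w \<in> U\<close> \<open>u \<noteq> w\<close> unfolding shattered_def by blast
  obtain p where p: "walk E p" "hd p = v" "last p = w" "u \<notin> set p"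
    using assms(3) C\<^sub>0 unfolding internally_connected_def induced_connected_def by blast
  have "v \<in> C" if "C \<in> cat S u \<inter> cat S w" for C
    using connected_contains_first_step[OF acyclic sym _ _ _ \<open>u \<noteq> w\<close> _ p] that v assms(3)
    unfolding cat_def nbrs_def internally_connected_def by auto
  moreover have "C\<^sub>0 \<in> cat S v \<inter> cat S w - cat S u" using C\<^sub>0 unfolding cat_def by auto
  ultimately have "cat S u \<inter> cat S w \<subset> cat S v \<inter> cat S w" unfolding cat_def by blast
  then show "\<exists>v\<in>nbrs E u. cdist S v w < cdist S u w"
    using cdist_less[OF \<open>finite S\<close>] v by blast
qed

end
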